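(* For every $\Gamma\in F(L)$, $\operatorname{div}(u_\Gamma)=\operatorname{tr}(g-g^* )$, where $g=\partial^L_x(\partial_y(\Gamma))$ and $g\mapsto g^*$ is the linear map of $A$ reversing the order of letters in each monomial and multiplying each letter by $-1$ (i.e. $(a_1\cdots a_n)^*=(-1)^na_n\cdots a_1$).
   Context: $A=\mathbb{R}\langle x,y\rangle$; $L\subset A$ the free Lie algebra on $x,y$. $\operatorname{tr}$ is the projection $A\to A/\operatorname{span}\{ab-ba\}$. $F(L)$ is the quotient of $L\otimes L$ by the span of $a\otimes b-b\otimes a$ and $a\otimes[b,c]-[a,b]\otimes c$, regarded inside $A/\operatorname{span}\{ab-ba\}$ via $a\otimes b\mapsto\operatorname{tr}(ab)$. For $x_0\in\{x,y\}$, $\partial_{x_0}$ maps cyclic words by $\operatorname{tr}(a_1\cdots a_n)\mapsto\sum_{i:\,a_i=x_0}a_{i+1}\cdots a_n a_1\cdots a_{i-1}$. For $\Gamma\in F(L)$, $u_\Gamma$ is the derivation of $L$ with $u_\Gamma(x)=\partial_y\Gamma$, $u_\Gamma(y)=-\partial_x\Gamma$. For $l\in A$, $\partial^L_{x_0}(l)=\sum\partial^1\epsilon(\partial^2)$, where $\sum\partial^1\otimes\partial^2$ is the sum over occurrences of $x_0$ in monomials of (prefix)$\otimes$(suffix), and $\epsilon$ is the constant term. $\operatorname{div}(u)=\operatorname{tr}(\partial^L_x(u(x))+\partial^L_y(u(y)))$ for $u\in\operatorname{Der}(L)$. *)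

theory Defs
  imports Complex_Main
begin

text \<open>The alphabet {x, y}; A = R<x,y> is represented by coefficient functions on words
  (elements of interest have finite support).\<close>
datatype letter = X | Y

type_synonym A = "letter list \<Rightarrow> real"

definition fsupp :: "A \<Rightarrow> bool" where
  "fsupp a \<longleftrightarrow> finite {w. a w \<noteq> 0}"

definition mono :: "letter list \<Rightarrow> A" where
  "mono w = (\<lambda>v. if v = w then 1 else 0)"

definition mulA :: "A \<Rightarrow> A \<Rightarrow> A" where
  "mulA a b = (\<lambda>w. \<Sum>i\<le>length w. a (take i w) * b (drop i w))"

text \<open>Free Lie algebra L: the smallest subspace containing x, y closed under commutators.\<close>
inductive_set Lie :: "A set" where
  gen: "mono [c] \<in> Lie"
| add: "a \<in> Lie \<Longrightarrow> b \<in> Lie \<Longrightarrow> (\<lambda>w. a w + b w) \<in> Lie"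
| smul: "a \<in> Lie \<Longrightarrow> (\<lambda>w. r * a w) \<in> Lie"
| br: "a \<in> Lie \<Longrightarrow> b \<in> Lie \<Longrightarrow> (\<lambda>w. mulA a b w - mulA b a w) \<in> Lie"

text \<open>Trace A \<rightarrow> A/[A,A]. The quotient is identified with functions on words that are
  constant on rotation classes: tr a assigns to w the total coefficient of a on the
  rotation class (cyclic word) of w.\<close>
definition tr :: "A \<Rightarrow> A" where
  "tr a = (\<lambda>w. \<Sum>v\<in>set (map (\<lambda>k. rotate k w) [0..<Suc (length w)]). a v)"

definition linext :: "(letter list \<Rightarrow> A) \<Rightarrow> A \<Rightarrow> A" where
  "linext f a = (\<lambda>v. \<Sum>w\<in>{w. a w \<noteq> 0}. a w * f w v)"

definition cder :: "letter \<Rightarrow> A \<Rightarrow> A" where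
  "cder x0 = linext (\<lambda>w v. \<Sum>i<length w.
      if w ! i = x0 \<and> drop (Suc i) w @ take i w = v then 1 else 0)"

definition cyc_der :: "letter \<Rightarrow> A \<Rightarrow> A" where
  "cyc_der x0 \<Gamma> = cder x0 (SOME P. fsupp P \<and> tr P = \<Gamma>)"

definition epsA :: "A \<Rightarrow> real" where
  "epsA a = a []"

definition derL :: "letter \<Rightarrow> A \<Rightarrow> A" where
  "derL x0 = linext (\<lambda>w v. \<Sum>i<length w.
      if w ! i = x0 \<and> take i w = v then epsA (mono (drop (Suc i) w)) else 0)"

text \<open>F(L) inside A/[A,A]: image of L \<otimes> L under a \<otimes> b \<mapsto> tr(ab).\<close>
definition FL :: "A set" where
  "FL = {tr (\<lambda>w. \<Sum>(a, b)\<leftarrow>ps. mulA a b w) | ps. \<forall>(a, b)\<in>set ps. a \<in> Lie \<and> b \<in> Lie}"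

text \<open>A derivation of the free Lie algebra L is determined by its values on the
  generators; we represent u by u(x) = u X, u(y) = u Y.\<close>
definition uGamma :: "A \<Rightarrow> letter \<Rightarrow> A" where
  "uGamma \<Gamma> c = (if c = X then cyc_der Y \<Gamma> else (\<lambda>w. - cyc_der X \<Gamma> w))"

definition divg :: "(letter \<Rightarrow> A) \<Rightarrow> A" where
  "divg u = tr (\<lambda>w. derL X (u X) w + derL Y (u Y) w)"

definition star :: "A \<Rightarrow> A" where
  "star g = (\<lambda>w. (-1) ^ length w * g (rev w))"

end

theory Submission
  imports Defs "HOL-Number_Theory.Cong"
begin

(* Let P be a finitely supported representative of Gamma and let cyclic_sum P w be the sum of
   the coefficients of P over the |w| rotations of w. This depends only on tr P, and both
   derivatives are expressed through it: (d_c Gamma)(u) = cyclic_sum P (c u), and d^L_c g (v) is the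
   coefficient of v c in g. As Gamma lies in F(L), P has the cyclic sums of a sum of products a b
   with a, b in L. The map * is an anti-automorphism acting as -1 on L, so (a b)^* = b a, which has
   the same cyclic sums as a b. Hence P and P^* have the same cyclic sums; reading the word x w y
   backwards then gives d^L_y (d_x Gamma) = (d^L_x (d_y Gamma))^* already before taking traces. *)

lemma rotate_eq_drop_take: "i \<le> length xs \<Longrightarrow> rotate i xs = drop i xs @ take i xs"
  by (cases "i = length xs") (simp_all add: rotate_drop_take)

lemma rotate_eq_nth_drop_take: "i < length xs \<Longrightarrow> rotate i xs = xs ! i # drop (Suc i) xs @ take i xs"
  by (simp add: Cons_nth_drop_Suc rotate_drop_take)

lemma rotate_eq_iff_eq_rotate_diff:
  assumes "i < length z" "length w = length z"
  shows "rotate i w = z \<longleftrightarrow> w = rotate (length z - i) z"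
proof -
  have full_turn: "rotate (length z - i) (rotate i v) = v" "rotate i (rotate (length z - i) v) = v"
    if "length v = length z" for v :: "'a list"
    using assms(1) that by (simp_all add: rotate_rotate)
  show ?thesis
  proof
    assume "rotate i w = z"
    then show "w = rotate (length z - i) z" using full_turn(1)[of w] assms(2) by metis
  next
    assume "w = rotate (length z - i) z"
    then show "rotate i w = z" using full_turn(2)[of z] by metis
  qed
qed

lemma inj_on_add_mod: "inj_on (\<lambda>j. (j + k) mod n) {..<n::nat}"
  by (auto intro!: inj_onI simp: cong_def[symmetric] cong_add_rcancel_nat dest: cong_less_modulus_unique_nat)

lemma sum_lessThan_reflect_mod: "(\<Sum>j<n. f ((n - j) mod n)) = (\<Sum>j<(n::nat). f j)"
proof -
  have reflect_reflect: "(n - (n - j) mod n) mod n = j" if "j < n" for j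
    using that by (cases "j = 0") auto
  show ?thesis
    by (rule sum.reindex_bij_witness[where i="\<lambda>j. (n - j) mod n" and j="\<lambda>j. (n - j) mod n"])
      (auto simp: reflect_reflect)
qed

definition cyclic_sum :: "('a list \<Rightarrow> 'b::comm_monoid_add) \<Rightarrow> 'a list \<Rightarrow> 'b" where
  "cyclic_sum P w = (\<Sum>j<length w. P (rotate j w))"

lemma card_rotations_le:
  "card {j. j < length w \<and> rotate j w = v} \<le> card {j. j < length w \<and> rotate j w = rotate k v}"
proof (rule card_inj_on_le)
  let ?n = "length w"
  show "inj_on (\<lambda>j. (j + k) mod ?n) {j. j < ?n \<and> rotate j w = v}"
    by (rule inj_on_subset[OF inj_on_add_mod]) auto
  show "(\<lambda>j. (j + k) mod ?n) ` {j. j < ?n \<and> rotate j w = v} \<subseteq> {j. j < ?n \<and> rotate j w = rotate k v}"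
  proof clarify
    fix j assume "j < ?n"
    then show "(j + k) mod ?n < ?n \<and> rotate ((j + k) mod ?n) w = rotate k (rotate j w)"
      by (metis rotate_conv_mod rotate_rotate add.commute mod_less_divisor gr_implies_not0 neq0_conv)
  qed
qed simp

lemma card_rotations_eq_card_stabilizer:
  assumes "k < length w"
  shows "card {j. j < length w \<and> rotate j w = rotate k w} = card {j. j < length w \<and> rotate j w = w}"
proof (rule antisym)
  have "rotate (length w - k) (rotate k w) = w"
    using assms by (simp add: rotate_rotate)
  then show "card {j. j < length w \<and> rotate j w = rotate k w} \<le> card {j. j < length w \<and> rotate j w = w}"
    using card_rotations_le[of w "rotate k w" "length w - k"] by simp
qed (rule card_rotations_le)

lemma set_rotations_eq_image:
  assumes "w \<noteq> []"
  shows "set (map (\<lambda>k. rotate k w) [0..<Suc (length w)]) = (\<lambda>j. rotate j w) ` {..<length w}"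
proof -
  have "w \<in> (\<lambda>j. rotate j w) ` {..<length w}"
    using assms by (auto intro: image_eqI[where x=0])
  then show ?thesis by (auto simp: atLeast0LessThan lessThan_Suc insert_absorb)
qed

lemma cyclic_sum_eq_card_stabilizer_mult_tr:
  "cyclic_sum P w = real (card {j. j < length w \<and> rotate j w = w}) * tr P w"
proof (cases "w = []")
  case True
  then show ?thesis by (simp add: cyclic_sum_def)
next
  case False
  let ?n = "length w" and ?orbit = "(\<lambda>j. rotate j w) ` {..<length w}"
  let ?stab = "card {j. j < length w \<and> rotate j w = w}"
  have "cyclic_sum P w = (\<Sum>v\<in>?orbit. \<Sum>j\<in>{j\<in>{..<?n}. rotate j w = v}. P (rotate j w))"
    unfolding cyclic_sum_def by (rule sum.image_gen) simp
  also have "\<dots> = (\<Sum>v\<in>?orbit. real ?stab * P v)"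
  proof (rule sum.cong[OF refl])
    fix v assume "v \<in> ?orbit"
    then obtain k where "k < ?n" "v = rotate k w" by auto
    then have "card {j\<in>{..<?n}. rotate j w = v} = ?stab"
      using card_rotations_eq_card_stabilizer by simp
    then show "(\<Sum>j\<in>{j\<in>{..<?n}. rotate j w = v}. P (rotate j w)) = real ?stab * P v"
      by simp
  qed
  also have "\<dots> = real ?stab * tr P w"
    unfolding tr_def set_rotations_eq_image[OF False] by (simp add: sum_distrib_left)
  finally show ?thesis .
qed

corollary cyclic_sum_cong_tr: "tr P = tr Q \<Longrightarrow> cyclic_sum P = cyclic_sum Q"
  by (simp add: fun_eq_iff cyclic_sum_eq_card_stabilizer_mult_tr)

lemma cyclic_sum_rev: "cyclic_sum P (rev w) = cyclic_sum (\<lambda>v. P (rev v)) w"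
proof -
  let ?n = "length w"
  have "cyclic_sum P (rev w) = (\<Sum>j<?n. P (rev (rotate ((?n - j) mod ?n) w)))"
    unfolding cyclic_sum_def by (intro sum.cong) (simp_all add: rotate_rev rotate_conv_mod[symmetric])
  also have "\<dots> = cyclic_sum (\<lambda>v. P (rev v)) w"
    unfolding cyclic_sum_def by (rule sum_lessThan_reflect_mod)
  finally show ?thesis .
qed

lemma cyclic_sum_star: "cyclic_sum (star P) u = (-1) ^ length u * cyclic_sum P (rev u)"
proof -
  have "cyclic_sum (star P) u = (-1) ^ length u * cyclic_sum (\<lambda>v. P (rev v)) u"
    by (simp add: cyclic_sum_def star_def sum_distrib_left)
  then show ?thesis by (simp add: cyclic_sum_rev)
qed

lemma cyclic_sum_mulA_commute: "cyclic_sum (mulA a b) = cyclic_sum (mulA b a)"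
proof
  fix w :: "letter list"
  let ?n = "length w"
  define f where "f = (\<lambda>(j, i). a (take i (rotate j w)) * b (drop i (rotate j w)))"
  define g where "g = (\<lambda>(j, i). b (take i (rotate j w)) * a (drop i (rotate j w)))"
  \<comment> \<open>Cutting the rotation by j after i letters gives the two pieces of the cut of the
    rotation by j + i after n - i letters, in swapped order.\<close>
  let ?swap = "\<lambda>(j, i). ((j + i) mod ?n, ?n - i)"
  have shift_back: "((j + i) mod ?n + (?n - i)) mod ?n = j" if "j < ?n" "i \<le> ?n" for j i
  proof -
    have "((j + i) mod ?n + (?n - i)) mod ?n = (j + i + (?n - i)) mod ?n"
      by (simp add: mod_add_left_eq)
    also have "j + i + (?n - i) = j + ?n" using that by simp
    finally show ?thesis using that by simp
  qed
  have swap_swap: "?swap (?swap p) = p" if "p \<in> {..<?n} \<times> {..?n}" for p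
    using that shift_back by auto
  have f_eq_g_swap: "f p = g (?swap p)" if p_mem: "p \<in> {..<?n} \<times> {..?n}" for p
  proof -
    obtain j i where p: "p = (j, i)" "i \<le> ?n" using p_mem by auto
    have "rotate ((j + i) mod ?n) w = rotate i (rotate j w)"
      by (simp add: rotate_rotate add.commute rotate_conv_mod[symmetric])
    also have "\<dots> = drop i (rotate j w) @ take i (rotate j w)"
      using p by (simp add: rotate_eq_drop_take)
    finally have "rotate ((j + i) mod ?n) w = drop i (rotate j w) @ take i (rotate j w)" .
    then show ?thesis using p by (simp add: f_def g_def)
  qed
  have "cyclic_sum (mulA a b) w = sum f ({..<?n} \<times> {..?n})"
    unfolding cyclic_sum_def mulA_def f_def by (simp add: sum.cartesian_product)
  also have "\<dots> = sum g ({..<?n} \<times> {..?n})"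
    by (rule sum.reindex_bij_witness[where i="?swap" and j="?swap"])
      (auto simp: swap_swap f_eq_g_swap intro: mod_less_divisor)
  also have "\<dots> = cyclic_sum (mulA b a) w"
    unfolding cyclic_sum_def mulA_def g_def by (simp add: sum.cartesian_product)
  finally show "cyclic_sum (mulA a b) w = cyclic_sum (mulA b a) w" .
qed

lemma star_mulA: "star (mulA a b) = mulA (star b) (star a)"
proof
  fix w :: "letter list"
  let ?n = "length w"
  have "star (mulA a b) w = (-1) ^ ?n * (\<Sum>i\<le>?n. a (rev (drop (?n - i) w)) * b (rev (take (?n - i) w)))"
    by (simp add: star_def mulA_def take_rev drop_rev)
  also have "\<dots> = (-1) ^ ?n * (\<Sum>i\<le>?n. a (rev (drop i w)) * b (rev (take i w)))"
    by (subst sum.atLeastAtMost_rev[of _ 0 ?n, simplified atLeast0AtMost]) simp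
  also have "\<dots> = (\<Sum>i\<le>?n. ((-1) ^ i * b (rev (take i w))) * ((-1) ^ (?n - i) * a (rev (drop i w))))"
    unfolding sum_distrib_left
  proof (rule sum.cong[OF refl])
    fix i assume "i \<in> {..?n}"
    then have "(-1::real) ^ ?n = (-1) ^ i * (-1) ^ (?n - i)" by (simp add: power_add[symmetric])
    then show "(-1) ^ ?n * (a (rev (drop i w)) * b (rev (take i w))) =
      (-1) ^ i * b (rev (take i w)) * ((-1) ^ (?n - i) * a (rev (drop i w)))" by simp
  qed
  also have "\<dots> = mulA (star b) (star a) w"
    by (simp add: mulA_def star_def)
  finally show "star (mulA a b) w = mulA (star b) (star a) w" .
qed

lemma mulA_uminus_uminus: "mulA (\<lambda>w. - a w) (\<lambda>w. - b w) = mulA a b"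
  by (simp add: mulA_def)

lemma star_Lie: "a \<in> Lie \<Longrightarrow> star a = (\<lambda>w. - a w)"
proof (induction rule: Lie.induct)
  case (gen c)
  have "rev w = [c] \<longleftrightarrow> w = [c]" for w by auto
  then show ?case by (auto simp: star_def Defs.mono_def)
next
  case (add a b)
  then show ?case by (auto simp: star_def fun_eq_iff distrib_left)
next
  case (smul a r)
  then show ?case by (auto simp: star_def fun_eq_iff mult.left_commute[of _ r])
next
  case (br a b)
  have "star (\<lambda>w. mulA a b w - mulA b a w) = (\<lambda>w. star (mulA a b) w - star (mulA b a) w)"
    by (simp add: star_def fun_eq_iff algebra_simps)
  also have "\<dots> = (\<lambda>w. mulA b a w - mulA a b w)"
    by (simp add: star_mulA br.IH mulA_uminus_uminus)
  finally show ?case by (simp add: fun_eq_iff)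
qed

lemma star_mulA_Lie: "a \<in> Lie \<Longrightarrow> b \<in> Lie \<Longrightarrow> star (mulA a b) = mulA b a"
  by (simp add: star_mulA star_Lie mulA_uminus_uminus)

lemma star_sum_list: "star (\<lambda>w. \<Sum>(a, b)\<leftarrow>ps. F a b w) = (\<lambda>w. \<Sum>(a, b)\<leftarrow>ps. star (F a b) w)"
  by (induction ps) (auto simp: star_def fun_eq_iff distrib_left)

lemma cyclic_sum_sum_list:
  "cyclic_sum (\<lambda>w. \<Sum>(a, b)\<leftarrow>ps. F a b w) u = (\<Sum>(a, b)\<leftarrow>ps. cyclic_sum (F a b) u)"
  by (induction ps) (auto simp: cyclic_sum_def sum.distrib)

lemma cyclic_sum_star_of_tr_FL:
  assumes "tr P \<in> FL"
  shows "cyclic_sum (star P) = cyclic_sum P"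
proof
  fix u :: "letter list"
  obtain ps where Lie_pairs: "\<forall>(a, b)\<in>set ps. a \<in> Lie \<and> b \<in> Lie"
    and tr_P: "tr P = tr (\<lambda>w. \<Sum>(a, b)\<leftarrow>ps. mulA a b w)"
    using assms unfolding FL_def by blast
  define Q where "Q = (\<lambda>w. \<Sum>(a, b)\<leftarrow>ps. mulA a b w)"
  have cyclic_sum_Q: "cyclic_sum P = cyclic_sum Q"
    using tr_P unfolding Q_def by (rule cyclic_sum_cong_tr)
  have "cyclic_sum (star Q) u = (\<Sum>(a, b)\<leftarrow>ps. cyclic_sum (mulA b a) u)"
    unfolding Q_def star_sum_list cyclic_sum_sum_list
    using Lie_pairs by (intro arg_cong[where f=sum_list] map_cong) (auto simp: star_mulA_Lie)
  also have "\<dots> = cyclic_sum Q u"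
    unfolding Q_def cyclic_sum_sum_list by (simp add: cyclic_sum_mulA_commute)
  finally have "cyclic_sum (star Q) u = cyclic_sum Q u" .
  then show "cyclic_sum (star P) u = cyclic_sum P u"
    by (simp add: cyclic_sum_star cyclic_sum_Q)
qed

lemma fsupp_add: "fsupp a \<Longrightarrow> fsupp b \<Longrightarrow> fsupp (\<lambda>w. a w + b w)"
  unfolding fsupp_def by (rule finite_subset[of _ "{w. a w \<noteq> 0} \<union> {w. b w \<noteq> 0}"]) auto

lemma fsupp_diff: "fsupp a \<Longrightarrow> fsupp b \<Longrightarrow> fsupp (\<lambda>w. a w - b w)"
  unfolding fsupp_def by (rule finite_subset[of _ "{w. a w \<noteq> 0} \<union> {w. b w \<noteq> 0}"]) auto

lemma fsupp_smult: "fsupp a \<Longrightarrow> fsupp (\<lambda>w. r * a w)"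
  unfolding fsupp_def by (rule finite_subset[of _ "{w. a w \<noteq> 0}"]) auto

lemma fsupp_uminus: "fsupp a \<Longrightarrow> fsupp (\<lambda>w. - a w)"
  unfolding fsupp_def by simp

lemma fsupp_mulA:
  assumes "fsupp a" "fsupp b"
  shows "fsupp (mulA a b)"
  unfolding fsupp_def
proof (rule finite_subset)
  show "{w. mulA a b w \<noteq> 0} \<subseteq> (\<lambda>(s, t). s @ t) ` ({w. a w \<noteq> 0} \<times> {w. b w \<noteq> 0})"
  proof
    fix w assume "w \<in> {w. mulA a b w \<noteq> 0}"
    then obtain i where "a (take i w) * b (drop i w) \<noteq> 0"
      unfolding mulA_def by (auto intro: sum.not_neutral_contains_not_neutral)
    then show "w \<in> (\<lambda>(s, t). s @ t) ` ({w. a w \<noteq> 0} \<times> {w. b w \<noteq> 0})"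
      by (intro image_eqI[where x="(take i w, drop i w)"]) auto
  qed
  show "finite ((\<lambda>(s, t). s @ t) ` ({w. a w \<noteq> 0} \<times> {w. b w \<noteq> 0}))"
    using assms unfolding fsupp_def by simp
qed

lemma fsupp_Lie: "a \<in> Lie \<Longrightarrow> fsupp a"
proof (induction rule: Lie.induct)
  case (gen c)
  show ?case unfolding fsupp_def Defs.mono_def
    by (rule finite_subset[of _ "{[c]}"]) auto
qed (simp_all add: fsupp_add fsupp_smult fsupp_diff fsupp_mulA)

lemma FL_has_fsupp_rep: "\<Gamma> \<in> FL \<Longrightarrow> \<exists>P. fsupp P \<and> tr P = \<Gamma>"
proof -
  assume "\<Gamma> \<in> FL"
  then obtain ps where Lie_pairs: "\<forall>(a, b)\<in>set ps. a \<in> Lie \<and> b \<in> Lie"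
    and "\<Gamma> = tr (\<lambda>w. \<Sum>(a, b)\<leftarrow>ps. mulA a b w)"
    unfolding FL_def by blast
  moreover have "fsupp (\<lambda>w. \<Sum>(a, b)\<leftarrow>ps. mulA a b w)"
    using Lie_pairs
    by (induction ps) (auto simp: fsupp_def[of "\<lambda>w. 0"] intro!: fsupp_add fsupp_mulA intro: fsupp_Lie)
  ultimately show ?thesis by blast
qed

lemma count_cuts_eq_count_rotations:
  "(\<Sum>i<length w. if w ! i = c \<and> drop (Suc i) w @ take i w = u then 1 else 0)
   = (\<Sum>i<length (c # u). if w = rotate (length (c # u) - i) (c # u) then 1 else 0 :: real)"
proof (cases "length w = length (c # u)")
  case True
  have cut_iff: "(w ! i = c \<and> drop (Suc i) w @ take i w = u) \<longleftrightarrow> w = rotate (length (c # u) - i) (c # u)"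
    if "i < length (c # u)" for i
  proof -
    have "(w ! i = c \<and> drop (Suc i) w @ take i w = u) \<longleftrightarrow> rotate i w = c # u"
      using that True by (simp add: rotate_eq_nth_drop_take)
    also have "\<dots> \<longleftrightarrow> w = rotate (length (c # u) - i) (c # u)"
      using that True by (rule rotate_eq_iff_eq_rotate_diff)
    finally show ?thesis .
  qed
  show ?thesis by (intro sum.cong) (simp_all only: True cut_iff lessThan_iff)
next
  case False
  have "length (drop (Suc i) w @ take i w) \<noteq> length u" if "i < length w" for i
    using False that by auto
  then have cuts: "(\<Sum>i<length w. if w ! i = c \<and> drop (Suc i) w @ take i w = u then 1 else 0) = (0::real)"
    by (intro sum.neutral) auto
  have not_rotation: "w \<noteq> rotate k (c # u)" for k
    using False by (metis length_rotate)
  have rotations: "(\<Sum>i<length (c # u). if w = rotate (length (c # u) - i) (c # u) then 1 else 0) = (0::real)"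
    by (intro sum.neutral ballI) (simp only: not_rotation if_False)
  show ?thesis by (simp only: cuts rotations)
qed

lemma cder_eq_cyclic_sum:
  assumes "fsupp P"
  shows "cder x0 P u = cyclic_sum P (x0 # u)"
proof -
  let ?z = "x0 # u"
  let ?n = "length ?z"
  let ?S = "{w. P w \<noteq> 0}"
  have "cder x0 P u = (\<Sum>w\<in>?S. P w *
      (\<Sum>i<length w. if w ! i = x0 \<and> drop (Suc i) w @ take i w = u then 1 else 0))"
    by (simp add: cder_def linext_def)
  also have "\<dots> = (\<Sum>w\<in>?S. \<Sum>i<?n. if w = rotate (?n - i) ?z then P w else 0)"
    unfolding count_cuts_eq_count_rotations sum_distrib_left by (intro sum.cong) auto
  also have "\<dots> = (\<Sum>i<?n. \<Sum>w\<in>?S. if w = rotate (?n - i) ?z then P w else 0)"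
    by (rule sum.swap)
  also have "\<dots> = (\<Sum>i<?n. P (rotate (?n - i) ?z))"
    using assms unfolding fsupp_def by (intro sum.cong refl) simp
  also have "\<dots> = (\<Sum>i<?n. P (rotate ((?n - i) mod ?n) ?z))"
    by (intro sum.cong refl) (subst rotate_conv_mod, rule refl)
  also have "\<dots> = cyclic_sum P ?z"
    unfolding cyclic_sum_def by (rule sum_lessThan_reflect_mod)
  finally show ?thesis .
qed

lemma fsupp_cder:
  assumes "fsupp P"
  shows "fsupp (cder x0 P)"
  unfolding fsupp_def
proof (rule finite_subset)
  let ?S = "{w. P w \<noteq> 0}"
  show "{u. cder x0 P u \<noteq> 0} \<subseteq> (\<Union>w\<in>?S. (\<lambda>i. drop (Suc i) w @ take i w) ` {..<length w})"
  proof
    fix u assume "u \<in> {u. cder x0 P u \<noteq> 0}"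
    then have "(\<Sum>w\<in>?S. P w *
        (\<Sum>i<length w. if w ! i = x0 \<and> drop (Suc i) w @ take i w = u then 1 else 0)) \<noteq> 0"
      by (simp add: cder_def linext_def)
    then obtain w where "w \<in> ?S"
      and "(\<Sum>i<length w. if w ! i = x0 \<and> drop (Suc i) w @ take i w = u then 1 else 0) \<noteq> (0::real)"
      by (rule sum.not_neutral_contains_not_neutral) simp
    moreover from this(2) obtain i where "i < length w" "drop (Suc i) w @ take i w = u"
      by (rule sum.not_neutral_contains_not_neutral) (simp split: if_splits)
    ultimately show "u \<in> (\<Union>w\<in>?S. (\<lambda>i. drop (Suc i) w @ take i w) ` {..<length w})"
      by blast
  qed
  show "finite (\<Union>w\<in>?S. (\<lambda>i. drop (Suc i) w @ take i w) ` {..<length w})"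
    using assms by (simp add: fsupp_def)
qed

lemma derL_apply:
  assumes "fsupp g"
  shows "derL x0 g v = g (v @ [x0])"
proof -
  have last_occurrence:
    "(\<Sum>i<length w. if w ! i = x0 \<and> take i w = v then epsA (Defs.mono (drop (Suc i) w)) else 0)
     = (if w = v @ [x0] then 1 else 0)" for w
  proof -
    have "(w ! i = x0 \<and> take i w = v \<and> drop (Suc i) w = []) \<longleftrightarrow> i = length v \<and> w = v @ [x0]"
      if "i < length w" for i
      using that id_take_nth_drop[OF that] by auto
    then have "(\<Sum>i<length w. if w ! i = x0 \<and> take i w = v then epsA (Defs.mono (drop (Suc i) w)) else 0)
        = (\<Sum>i<length w. if i = length v \<and> w = v @ [x0] then 1 else 0)"
      by (intro sum.cong) (auto simp: epsA_def Defs.mono_def)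
    then show ?thesis by simp
  qed
  have "derL x0 g v = (\<Sum>w\<in>{w. g w \<noteq> 0}. if w = v @ [x0] then g w else 0)"
    unfolding derL_def linext_def last_occurrence by (intro sum.cong) auto
  also have "\<dots> = g (v @ [x0])"
    using assms by (simp add: fsupp_def)
  finally show ?thesis .
qed

lemma cder_append_eq_star:
  assumes "tr P \<in> FL" "fsupp P"
  shows "cder x P (w @ [y]) = star (\<lambda>v. cder y P (v @ [x])) w"
proof -
  have "cder x P (w @ [y]) = cyclic_sum (star P) (x # w @ [y])"
    using assms by (simp add: cder_eq_cyclic_sum cyclic_sum_star_of_tr_FL)
  also have "\<dots> = (-1) ^ length w * cyclic_sum P (y # rev w @ [x])"
    by (simp add: cyclic_sum_star)
  also have "\<dots> = star (\<lambda>v. cder y P (v @ [x])) w"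
    using assms by (simp add: star_def cder_eq_cyclic_sum)
  finally show ?thesis .
qed

theorem mainTheorem15:
  assumes "\<Gamma> \<in> FL"
  shows "divg (uGamma \<Gamma>) = tr (\<lambda>w. derL X (cyc_der Y \<Gamma>) w - star (derL X (cyc_der Y \<Gamma>)) w)"
proof -
  define P where "P = (SOME P. fsupp P \<and> tr P = \<Gamma>)"
  have P: "fsupp P" "tr P = \<Gamma>"
    unfolding P_def using someI_ex[OF FL_has_fsupp_rep[OF assms]] by auto
  have cyc_der_eq: "cyc_der x0 \<Gamma> = cder x0 P" for x0
    by (simp add: cyc_der_def P_def)
  define g where "g = derL X (cyc_der Y \<Gamma>)"
  have g_eq: "g = (\<lambda>v. cder Y P (v @ [X]))"
    by (auto simp: g_def cyc_der_eq derL_apply fsupp_cder P)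
  have derL_Y: "derL Y (uGamma \<Gamma> Y) w = - star g w" for w
  proof -
    have "derL Y (uGamma \<Gamma> Y) w = - cder X P (w @ [Y])"
      using fsupp_uminus[OF fsupp_cder[OF P(1)]] by (simp add: uGamma_def cyc_der_eq derL_apply)
    also have "\<dots> = - star g w"
      using cder_append_eq_star[of P X w Y] assms P unfolding g_eq by simp
    finally show ?thesis .
  qed
  have "uGamma \<Gamma> X = cyc_der Y \<Gamma>"
    by (simp add: uGamma_def)
  then show ?thesis
    unfolding divg_def g_def[symmetric] using derL_Y by (simp add: g_def)
qed

end
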